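(* (1) For $\mathcal{T}\in\mathbb{T}_k$, $\mathcal{T}'\in\mathbb{T}_l$, $$R_{\mathcal{T}}.R_{\mathcal{T}'}=\sum_{\substack{\mathcal{T}''\in\mathbb{T}_{k+l}\\ \mathcal{T}''_{\mid[k]}=\mathcal{T},\ \mathrm{Std}(\mathcal{T}''_{\mid[k+l]\setminus[k]})=\mathcal{T}'}}R_{\mathcal{T}''}.$$ (2) For $\mathcal{T}\in\mathbb{T}_k$, $\mathcal{T}'\in\mathbb{T}_l$, $$R_{\mathcal{T}}\downarrow R_{\mathcal{T}'}=\sum_{\substack{\mathcal{T}''\in\mathbb{T}_{k+l}\\ \mathcal{T}''_{\mid[k]}=\mathcal{T},\ \mathrm{Std}(\mathcal{T}''_{\mid[k+l]\setminus[k]})=\mathcal{T}',\\ [k]\leq_{\mathcal{T}''}[k+l]\setminus[k]}}R_{\mathcal{T}''}.$$ (3) For $\mathcal{T}\in\mathbb{T}_n$, $$\Delta(R_{\mathcal{T}})=\sum_{\substack{O\in\mathcal{T}\\ [n]\setminus O<_{\mathcal{T}}O}}R_{\mathrm{Std}(\mathcal{T}_{\mid[n]\setminus O})}\otimes R_{\mathrm{Std}(\mathcal{T}_{\mid O})}.$$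
   Context: Let $K$ be a field. For $n\geq0$, $[n]=\{1,\ldots,n\}$, $\mathbb{T}_n$ is the set of topologies on $[n]$, $\mathcal{H}_{\mathbb{T}}$ the $K$-vector space with basis $\bigsqcup_n\mathbb{T}_n$. For a topology $\mathcal{T}$ on finite $X$: $i\leq_{\mathcal{T}}j$ iff every open set containing $i$ contains $j$; $i<_{\mathcal{T}}j$ iff $i\leq_{\mathcal{T}}j$ and not $j\leq_{\mathcal{T}}i$. For $I,J\subseteq X$, $I\leq_{\mathcal{T}}J$ means $i\leq_{\mathcal{T}}j$ for all $i\in I,j\in J$, and $I<_{\mathcal{T}}J$ means $i<_{\mathcal{T}}j$ for all $i\in I,j\in J$ (vacuous if $I$ or $J$ is empty). For $Y\subseteq X$, $\mathcal{T}_{\mid Y}=\{O\cap Y\mid O\in\mathcal{T}\}$; if $X$ is totally ordered of size $m$, $\mathrm{Std}(\mathcal{T})\in\mathbb{T}_m$ is the transport along the increasing bijection $X\to[m]$. For $O\subseteq\mathbb{N}$, $O(+n)=\{k+n\mid k\in O\}$. Bilinear products: for $\mathcal{T}\in\mathbb{T}_n,\mathcal{T}'\in\mathbb{T}_{n'}$, $\mathcal{T}.\mathcal{T}'$ is the topology on $[n+n']$ with open sets $O\sqcup O'(+n)$, and $\mathcal{T}\downarrow\mathcal{T}'$ the topology with open sets $O\sqcup[n'](+n)$ and $O'(+n)$ ($O\in\mathcal{T},O'\in\mathcal{T}'$). Coproduct $\Delta(\mathcal{T})=\sum_{O\in\mathcal{T}}\mathrm{Std}(\mathcal{T}_{\mid[n]\setminus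 O})\otimes\mathrm{Std}(\mathcal{T}_{\mid O})$. $\mathbb{T}_n$ is partially ordered by refinement: $\mathcal{T}\leq\mathcal{T}'$ iff every open set of $\mathcal{T}$ is an open set of $\mathcal{T}'$. The ribbon basis $(R_{\mathcal{T}})$ of $\mathcal{H}_{\mathbb{T}}$ is defined by $\mathcal{T}=\sum_{\mathcal{T}'\in\mathbb{T}_n,\ \mathcal{T}'\leq\mathcal{T}}R_{\mathcal{T}'}$ for all $\mathcal{T}\in\mathbb{T}_n$, $n\geq0$ (equivalently via Möbius inversion). *)

theory Defs
  imports Main "HOL-Library.Function_Algebras"
begin

text \<open>A topology on [n] is represented by its set of open sets.  On a finite set,
closure under binary unions and intersections is closure under arbitrary ones.\<close>
definition tops :: "nat \<Rightarrow> nat set set set" where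
  "tops n = {T. T \<subseteq> Pow {1..n} \<and> {} \<in> T \<and> {1..n} \<in> T \<and>
               (\<forall>A\<in>T. \<forall>B\<in>T. A \<union> B \<in> T \<and> A \<inter> B \<in> T)}"

definition tsize :: "nat set set \<Rightarrow> nat" where
  "tsize T = card (\<Union>T)"

definition tleq :: "nat set set \<Rightarrow> nat \<Rightarrow> nat \<Rightarrow> bool" where
  "tleq T i j \<longleftrightarrow> (\<forall>U\<in>T. i \<in> U \<longrightarrow> j \<in> U)"

definition tless :: "nat set set \<Rightarrow> nat \<Rightarrow> nat \<Rightarrow> bool" where
  "tless T i j \<longleftrightarrow> tleq T i j \<and> \<not> tleq T j i"

definition tleq_set :: "nat set set \<Rightarrow> nat set \<Rightarrow> nat set \<Rightarrow> bool" where
  "tleq_set T I J \<longleftrightarrow> (\<forall>i\<in>I. \<forall>j\<in>J. tleq T i j)"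

definition tless_set :: "nat set set \<Rightarrow> nat set \<Rightarrow> nat set \<Rightarrow> bool" where
  "tless_set T I J \<longleftrightarrow> (\<forall>i\<in>I. \<forall>j\<in>J. tless T i j)"

definition restr :: "nat set set \<Rightarrow> nat set \<Rightarrow> nat set set" where
  "restr T Y = (\<lambda>U. U \<inter> Y) ` T"

text \<open>Standardization: transport along the increasing bijection from the underlying
set X (= union of the open sets) onto [card X], x \<mapsto> #{y \<in> X. y \<le> x}.\<close>
definition Std :: "nat set set \<Rightarrow> nat set set" where
  "Std T = (\<lambda>U. (\<lambda>x. card {y \<in> \<Union>T. y \<le> x}) ` U) ` T"

definition shift :: "nat set \<Rightarrow> nat \<Rightarrow> nat set" where
  "shift U n = (\<lambda>k. k + n) ` U"

definition tdot :: "nat set set \<Rightarrow> nat set set \<Rightarrow> nat set set" where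
  "tdot T T' = {U \<union> shift U' (tsize T) | U U'. U \<in> T \<and> U' \<in> T'}"

definition tdown :: "nat set set \<Rightarrow> nat set set \<Rightarrow> nat set set" where
  "tdown T T' = {U \<union> shift {1..tsize T'} (tsize T) | U. U \<in> T} \<union> {shift U' (tsize T) | U'. U' \<in> T'}"

text \<open>Elements of H_T are (finitely supported) coefficient functions on topologies;
elements of H_T \<otimes> H_T are coefficient functions on pairs of topologies.\<close>
type_synonym 'k vec = "nat set set \<Rightarrow> 'k"
type_synonym 'k vec2 = "nat set set \<times> nat set set \<Rightarrow> 'k"

definition bvec :: "nat set set \<Rightarrow> 'k::field vec" where
  "bvec T = (\<lambda>S. if S = T then 1 else 0)"

definition supp :: "'k::field vec \<Rightarrow> nat set set set" where
  "supp x = {A. x A \<noteq> 0}"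

definition bilin :: "(nat set set \<Rightarrow> nat set set \<Rightarrow> nat set set) \<Rightarrow> 'k::field vec \<Rightarrow> 'k vec \<Rightarrow> 'k vec" where
  "bilin f x y = (\<lambda>S. \<Sum>A\<in>supp x. \<Sum>B\<in>supp y. if f A B = S then x A * y B else 0)"

definition prod_dot :: "'k::field vec \<Rightarrow> 'k vec \<Rightarrow> 'k vec" where
  "prod_dot = bilin tdot"

definition prod_down :: "'k::field vec \<Rightarrow> 'k vec \<Rightarrow> 'k vec" where
  "prod_down = bilin tdown"

definition tensor :: "'k::field vec \<Rightarrow> 'k vec \<Rightarrow> 'k vec2" where
  "tensor u v = (\<lambda>(A, B). u A * v B)"

definition coprod :: "'k::field vec \<Rightarrow> 'k vec2" where
  "coprod x = (\<lambda>(A, B). \<Sum>T\<in>supp x. x T *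
       (\<Sum>U\<in>T. if Std (restr T (\<Union>T - U)) = A \<and> Std (restr T U) = B then 1 else 0))"

text \<open>Defined by T = sum over T' \<le> T (refinement, i.e. T' \<subseteq> T, in the same T_n) of R_T',
i.e. R_T = T - sum over T' < T of R_T'.  Zero on non-topologies.\<close>
function ribbon :: "nat set set \<Rightarrow> 'k::field vec" where
  "ribbon T = (if T \<in> tops (tsize T)
      then bvec T - (\<Sum>T'\<in>{T'\<in>tops (tsize T). T' \<subset> T}. ribbon T')
      else 0)"
  by auto
termination
proof (relation "measure card")
  fix T T' :: "nat set set"
  assume "T \<in> tops (tsize T)" "T' \<in> {T'\<in>tops (tsize T). T' \<subset> T}"
  moreover have "finite T" using \<open>T \<in> tops (tsize T)\<close>
    unfolding tops_def by (auto intro: finite_subset)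
  ultimately show "(T', T) \<in> measure card" by (auto intro: psubset_card_mono)
qed auto

end

theory Submission
  imports Defs "HOL-Library.Product_Order"
begin

text \<open>
  The ribbon basis is obtained from the basis of topologies by Moebius inversion along refinement,
  so an identity between ribbon expansions holds as soon as both sides have the same sums over
  the lower sets of refinement.

  The product T.T' is the direct sum of T and the shifted T', and T\<down>T' is the ordinal sum in
  which [k] lies below the remaining points.  A topology T'' on [k+l] refines such a sum iff
  T''|[k] refines T, Std(T''|[k+l]-[k]) refines T' and (for the ordinal sum) [k] \<le> [k+l]-[k]
  in T''.  Grouping the refinements of T.T' by these two restrictions shows that the right-hand
  sides have lower sums T.T' resp. T\<down>T', and by bilinearity so do the left-hand sides.

  For the coproduct, the refinements S of T containing U with [n]-U < U in S are exactly the
  ordinal sums of a refinement of T|[n]-U and a refinement of T|U.  Summing over them turns the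
  lower sums of the right-hand side into the sum over U \<in> T of Std(T|[n]-U) \<otimes> Std(T|U),
  which is \<Delta>(T).
\<close>

lemma sum_fun_apply: "(\<Sum>a\<in>A. f a) x = (\<Sum>a\<in>A. f a x)"
  by (induction A rule: infinite_finite_induct) auto

lemma eq_if_sums_over_lower_sets_eq:
  fixes G H :: "'a::order \<Rightarrow> 'b::ab_group_add"
  assumes "finite D"
    and lower_sums: "\<And>x. x \<in> D \<Longrightarrow> (\<Sum>y\<in>{y\<in>D. y \<le> x}. G y) = (\<Sum>y\<in>{y\<in>D. y \<le> x}. H y)"
  shows "x \<in> D \<Longrightarrow> G x = H x"
proof (induction "card {y\<in>D. y < x}" arbitrary: x rule: less_induct)
  case less
  have strictly_below: "G y = H y" if "y \<in> {y\<in>D. y < x}" for y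
  proof (rule less.hyps)
    have "{z\<in>D. z < y} \<subset> {z\<in>D. z < x}"
      using that by (auto dest: less_trans)
    then show "card {z\<in>D. z < y} < card {z\<in>D. z < x}"
      using \<open>finite D\<close> by (auto intro: psubset_card_mono)
  qed (use that in simp)
  have split: "{y\<in>D. y \<le> x} = insert x {y\<in>D. y < x}"
    using less.prems by (auto simp: order.order_iff_strict)
  have "G x + (\<Sum>y\<in>{y\<in>D. y < x}. G y) = H x + (\<Sum>y\<in>{y\<in>D. y < x}. H y)"
    using lower_sums[OF less.prems] \<open>finite D\<close> by (simp add: split)
  moreover have "(\<Sum>y\<in>{y\<in>D. y < x}. G y) = (\<Sum>y\<in>{y\<in>D. y < x}. H y)"
    using strictly_below by (rule sum.cong[OF refl])
  ultimately show ?case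
    by simp
qed

lemma supp_bvec: "supp (bvec T :: 'k::field vec) = {T}"
  by (simp add: supp_def bvec_def)

lemma supp_diff: "supp (x - y) \<subseteq> supp x \<union> supp y"
  by (auto simp: supp_def)

lemma supp_sum_subset:
  assumes "\<And>i. i \<in> I \<Longrightarrow> supp (u i) \<subseteq> X"
  shows "supp (\<Sum>i\<in>I. u i) \<subseteq> X"
proof
  fix x assume "x \<in> supp (\<Sum>i\<in>I. u i)"
  then have "(\<Sum>i\<in>I. u i x) \<noteq> 0"
    by (simp add: supp_def sum_fun_apply)
  then obtain i where "i \<in> I" "u i x \<noteq> 0"
    by (meson sum.neutral)
  then show "x \<in> X"
    using assms by (auto simp: supp_def)
qed

lemma bilin_eq_sum_over_superset:
  assumes "finite X" "finite Y" "supp x \<subseteq> X" "supp y \<subseteq> Y"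
  shows "bilin f x y S = (\<Sum>(A, B)\<in>X \<times> Y. of_bool (f A B = S) * x A * y B)"
proof -
  have "bilin f x y S = (\<Sum>A\<in>supp x. \<Sum>B\<in>supp y. of_bool (f A B = S) * x A * y B)"
    unfolding bilin_def by (intro sum.cong refl) simp
  also have "\<dots> = (\<Sum>A\<in>X. \<Sum>B\<in>Y. of_bool (f A B = S) * x A * y B)"
    using assms by (intro sum.mono_neutral_cong_left) (auto simp: supp_def)
  finally show ?thesis
    by (simp add: sum.cartesian_product)
qed

lemma bilin_sum_left:
  assumes "finite X" "finite Y" "\<And>i. i \<in> I \<Longrightarrow> supp (u i) \<subseteq> X" "supp y \<subseteq> Y"
  shows "bilin f (\<Sum>i\<in>I. u i) y = (\<Sum>i\<in>I. bilin f (u i) y)"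
proof (cases "finite I")
  case True
  show ?thesis
  proof
    fix S
    have "supp (\<Sum>i\<in>I. u i) \<subseteq> X"
      using assms by (auto intro!: supp_sum_subset)
    then have "bilin f (\<Sum>i\<in>I. u i) y S
        = (\<Sum>(A, B)\<in>X \<times> Y. \<Sum>i\<in>I. of_bool (f A B = S) * u i A * y B)"
      using assms by (simp add: bilin_eq_sum_over_superset sum_fun_apply sum_distrib_left sum_distrib_right)
    also have "\<dots> = (\<Sum>i\<in>I. \<Sum>(A, B)\<in>X \<times> Y. of_bool (f A B = S) * u i A * y B)"
      by (subst sum.swap) (simp add: case_prod_unfold)
    also have "\<dots> = (\<Sum>i\<in>I. bilin f (u i) y) S"
      using assms by (simp add: bilin_eq_sum_over_superset sum_fun_apply)
    finally show "bilin f (\<Sum>i\<in>I. u i) y S = (\<Sum>i\<in>I. bilin f (u i) y) S" .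
  qed
qed (simp add: bilin_def supp_def zero_fun_def)

lemma bilin_sum_right:
  assumes "finite X" "finite Y" "supp x \<subseteq> X" "\<And>j. j \<in> J \<Longrightarrow> supp (v j) \<subseteq> Y"
  shows "bilin f x (\<Sum>j\<in>J. v j) = (\<Sum>j\<in>J. bilin f x (v j))"
proof (cases "finite J")
  case True
  show ?thesis
  proof
    fix S
    have "supp (\<Sum>j\<in>J. v j) \<subseteq> Y"
      using assms by (auto intro!: supp_sum_subset)
    then have "bilin f x (\<Sum>j\<in>J. v j) S
        = (\<Sum>(A, B)\<in>X \<times> Y. \<Sum>j\<in>J. of_bool (f A B = S) * x A * v j B)"
      using assms by (simp add: bilin_eq_sum_over_superset sum_fun_apply sum_distrib_left)
    also have "\<dots> = (\<Sum>j\<in>J. \<Sum>(A, B)\<in>X \<times> Y. of_bool (f A B = S) * x A * v j B)"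
      by (subst sum.swap) (simp add: case_prod_unfold)
    also have "\<dots> = (\<Sum>j\<in>J. bilin f x (v j)) S"
      using assms by (simp add: bilin_eq_sum_over_superset sum_fun_apply)
    finally show "bilin f x (\<Sum>j\<in>J. v j) S = (\<Sum>j\<in>J. bilin f x (v j)) S" .
  qed
qed (simp add: bilin_def supp_def zero_fun_def)

lemma bilin_bvec: "bilin f (bvec T) (bvec T') = (bvec (f T T') :: 'k::field vec)"
  unfolding bilin_def supp_bvec by (auto simp: bvec_def)

lemma coprod_eq_sum_over_superset:
  assumes "finite X" "supp x \<subseteq> X"
  shows "coprod x (A, B) = (\<Sum>T\<in>X. x T *
       (\<Sum>U\<in>T. if Std (restr T (\<Union>T - U)) = A \<and> Std (restr T U) = B then 1 else 0))"
  unfolding coprod_def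
  by (simp, rule sum.mono_neutral_left) (use assms in \<open>auto simp: supp_def\<close>)

lemma coprod_sum:
  assumes "finite X" "\<And>i. i \<in> I \<Longrightarrow> supp (u i) \<subseteq> X"
  shows "coprod (\<Sum>i\<in>I. u i) = (\<Sum>i\<in>I. coprod (u i))"
proof (cases "finite I")
  case True
  show ?thesis
  proof (intro ext, clarify)
    fix A B
    let ?c = "\<lambda>T. \<Sum>U\<in>T. if Std (restr T (\<Union>T - U)) = A \<and> Std (restr T U) = B then 1 else 0"
    have "supp (\<Sum>i\<in>I. u i) \<subseteq> X"
      using assms by (auto intro!: supp_sum_subset)
    then have "coprod (\<Sum>i\<in>I. u i) (A, B) = (\<Sum>T\<in>X. \<Sum>i\<in>I. u i T * ?c T)"
      using assms by (simp add: coprod_eq_sum_over_superset sum_fun_apply sum_distrib_right)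
    also have "\<dots> = (\<Sum>i\<in>I. \<Sum>T\<in>X. u i T * ?c T)"
      by (rule sum.swap)
    also have "\<dots> = (\<Sum>i\<in>I. coprod (u i)) (A, B)"
      using assms by (simp add: coprod_eq_sum_over_superset sum_fun_apply)
    finally show "coprod (\<Sum>i\<in>I. u i) (A, B) = (\<Sum>i\<in>I. coprod (u i)) (A, B)" .
  qed
qed (auto simp: coprod_def supp_def)

lemma coprod_bvec:
  "coprod (bvec T) =
     (\<Sum>U\<in>T. tensor (bvec (Std (restr T (\<Union>T - U)))) (bvec (Std (restr T U))) :: 'k::field vec2)"
proof (intro ext, clarify)
  fix A B
  have "coprod (bvec T :: 'k vec) (A, B) =
      (\<Sum>U\<in>T. if Std (restr T (\<Union>T - U)) = A \<and> Std (restr T U) = B then 1 else 0)"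
    unfolding coprod_def supp_bvec by (simp add: bvec_def)
  also have "\<dots> = (\<Sum>U\<in>T. tensor (bvec (Std (restr T (\<Union>T - U)))) (bvec (Std (restr T U))) (A, B))"
    by (intro sum.cong refl) (simp add: tensor_def bvec_def)
  finally show "coprod (bvec T :: 'k vec) (A, B) =
      (\<Sum>U\<in>T. tensor (bvec (Std (restr T (\<Union>T - U)))) (bvec (Std (restr T U)))) (A, B)"
    by (simp add: sum_fun_apply)
qed

lemma tensor_sum: "tensor (\<Sum>a\<in>A. u a) (\<Sum>b\<in>B. v b) = (\<Sum>a\<in>A. \<Sum>b\<in>B. tensor (u a) (v b))"
  by (auto simp: tensor_def sum_fun_apply sum_product)

definition topology_on :: "'a set \<Rightarrow> 'a set set \<Rightarrow> bool" where
  "topology_on X M \<longleftrightarrow> M \<subseteq> Pow X \<and> {} \<in> M \<and> X \<in> M \<and> (\<forall>A\<in>M. \<forall>B\<in>M. A \<union> B \<in> M \<and> A \<inter> B \<in> M)"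

lemma tops_iff_topology_on: "T \<in> tops n \<longleftrightarrow> topology_on {1..n} T"
  by (simp add: tops_def topology_on_def)

lemma topology_onD:
  assumes "topology_on X M"
  shows "M \<subseteq> Pow X" "{} \<in> M" "X \<in> M" "A \<in> M \<Longrightarrow> B \<in> M \<Longrightarrow> A \<union> B \<in> M"
    "A \<in> M \<Longrightarrow> B \<in> M \<Longrightarrow> A \<inter> B \<in> M"
  using assms by (auto simp: topology_on_def)

lemma topology_on_Union: "topology_on X M \<Longrightarrow> \<Union>M = X"
  unfolding topology_on_def by auto

lemma tsize_tops: "T \<in> tops n \<Longrightarrow> tsize T = n"
  by (simp add: tsize_def tops_iff_topology_on topology_on_Union)

lemma finite_tops: "finite (tops n)"
  by (rule finite_subset[of _ "Pow (Pow {1..n})"]) (auto simp: tops_def)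

lemma tops_finite: "T \<in> tops n \<Longrightarrow> finite T"
  by (rule finite_subset[of _ "Pow {1..n}"]) (auto simp: tops_def)

lemma topology_on_image:
  assumes "topology_on X M" "inj_on \<sigma> X"
  shows "topology_on (\<sigma> ` X) (image \<sigma> ` M)"
  unfolding topology_on_def
proof (intro conjI ballI)
  fix A B assume "A \<in> image \<sigma> ` M" "B \<in> image \<sigma> ` M"
  then obtain A0 B0 where "A0 \<in> M" "B0 \<in> M" "A = \<sigma> ` A0" "B = \<sigma> ` B0"
    by auto
  moreover have "\<sigma> ` (A0 \<inter> B0) = \<sigma> ` A0 \<inter> \<sigma> ` B0"
    using calculation topology_onD(1)[OF assms(1)] by (intro inj_on_image_Int[OF assms(2)]) auto
  ultimately show "A \<union> B \<in> image \<sigma> ` M" "A \<inter> B \<in> image \<sigma> ` M"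
    using topology_onD[OF assms(1)] by (metis image_Un image_eqI)+
qed (use topology_onD[OF assms(1)] in auto)

lemma topology_on_restr:
  assumes "topology_on X M" "Y \<subseteq> X"
  shows "topology_on Y (restr M Y)"
  unfolding topology_on_def
proof (intro conjI ballI)
  fix A B assume "A \<in> restr M Y" "B \<in> restr M Y"
  then obtain A0 B0 where "A0 \<in> M" "B0 \<in> M" "A = A0 \<inter> Y" "B = B0 \<inter> Y"
    by (auto simp: restr_def)
  moreover have "A \<union> B = (A0 \<union> B0) \<inter> Y" "A \<inter> B = (A0 \<inter> B0) \<inter> Y"
    using calculation by auto
  ultimately show "A \<union> B \<in> restr M Y" "A \<inter> B \<in> restr M Y"
    using topology_onD[OF assms(1)] by (auto simp: restr_def)
qed (use topology_onD[OF assms(1)] assms(2) in \<open>auto simp: restr_def\<close>)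

lemma restr_mono: "S \<subseteq> T \<Longrightarrow> restr S Y \<subseteq> restr T Y"
  unfolding restr_def by blast

declare ribbon.simps [simp del]

lemma ribbon_unfold:
  "T \<in> tops (tsize T) \<Longrightarrow> ribbon T = bvec T - (\<Sum>T'\<in>{T'\<in>tops (tsize T). T' \<subset> T}. ribbon T')"
  by (subst ribbon.simps) simp

lemma supp_ribbon_subset: "supp (ribbon T :: 'k::field vec) \<subseteq> tops (tsize T)"
proof (induction T rule: ribbon.induct)
  case (1 T)
  show ?case
  proof (cases "T \<in> tops (tsize T)")
    case True
    have "supp (\<Sum>T'\<in>{T'\<in>tops (tsize T). T' \<subset> T}. ribbon T' :: 'k vec) \<subseteq> tops (tsize T)"
      using "1.IH"[OF True] by (intro supp_sum_subset) (metis (mono_tags, lifting) mem_Collect_eq tsize_tops)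
    then show ?thesis
      using True supp_diff[of "bvec T"] unfolding ribbon_unfold[OF True] supp_bvec by blast
  qed (subst ribbon.simps, simp add: supp_def)
qed

lemma supp_ribbon: "T \<in> tops n \<Longrightarrow> supp (ribbon T) \<subseteq> tops n"
  using supp_ribbon_subset tsize_tops by metis

lemma sum_ribbon_below:
  assumes "T \<in> tops n"
  shows "(\<Sum>T'\<in>{T'\<in>tops n. T' \<subseteq> T}. ribbon T') = (bvec T :: 'k::field vec)"
proof -
  have "{T'\<in>tops n. T' \<subseteq> T} = insert T {T'\<in>tops n. T' \<subset> T}"
    using assms by auto
  then have "(\<Sum>T'\<in>{T'\<in>tops n. T' \<subseteq> T}. ribbon T') = ribbon T + (\<Sum>T'\<in>{T'\<in>tops n. T' \<subset> T}. ribbon T')"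
    by (simp add: finite_tops)
  also have "\<dots> = bvec T"
    using assms by (simp only: ribbon_unfold tsize_tops diff_add_cancel)
  finally show ?thesis .
qed

definition rank :: "nat set \<Rightarrow> nat \<Rightarrow> nat" where
  "rank X x = card {y\<in>X. y \<le> x}"

lemma Std_eq_image_rank: "Std M = image (rank (\<Union>M)) ` M"
  by (simp add: Std_def rank_def)

lemma strict_mono_on_rank: "finite X \<Longrightarrow> strict_mono_on X (rank X)"
  unfolding strict_mono_on_def rank_def
proof (intro allI impI)
  fix r s assume "finite X" and rs: "r \<in> X \<and> s \<in> X \<and> r < s"
  then have "{y\<in>X. y \<le> r} \<subseteq> {y\<in>X. y \<le> s}" "s \<in> {y\<in>X. y \<le> s} - {y\<in>X. y \<le> r}"
    by auto
  then have "{y\<in>X. y \<le> r} \<subset> {y\<in>X. y \<le> s}"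
    by blast
  then show "card {y\<in>X. y \<le> r} < card {y\<in>X. y \<le> s}"
    using \<open>finite X\<close> by (intro psubset_card_mono) auto
qed

lemma bij_betw_rank: "finite X \<Longrightarrow> bij_betw (rank X) X {1..card X}"
proof -
  assume "finite X"
  then have inj: "inj_on (rank X) X"
    using strict_mono_on_rank strict_mono_on_imp_inj_on by blast
  have "rank X ` X \<subseteq> {1..card X}"
    using \<open>finite X\<close> by (auto simp: rank_def Suc_le_eq card_gt_0_iff intro: card_mono)
  moreover have "card (rank X ` X) = card {1..card X}"
    using card_image[OF inj] by simp
  ultimately show ?thesis
    using inj by (simp add: bij_betw_def card_subset_eq)
qed

lemma rank_upper_interval: "x \<in> {1..k + l} - {1..k} \<Longrightarrow> rank ({1..k + l} - {1..k}) x = x - k"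
proof -
  assume "x \<in> {1..k + l} - {1..k}"
  then have "{y\<in>{1..k + l} - {1..k}. y \<le> x} = {Suc k..x}"
    by auto
  then show ?thesis
    by (simp add: rank_def)
qed

lemma Std_tops:
  assumes "topology_on X M" "finite X"
  shows "Std M \<in> tops (card X)"
proof -
  have "topology_on (rank X ` X) (image (rank X) ` M)"
    using assms bij_betw_rank by (intro topology_on_image) (auto simp: bij_betw_def)
  then show ?thesis
    using assms bij_betw_rank[of X]
    by (simp add: Std_eq_image_rank topology_on_Union tops_iff_topology_on bij_betw_def)
qed

lemma topology_on_restr_tops: "T \<in> tops n \<Longrightarrow> Y \<subseteq> {1..n} \<Longrightarrow> topology_on Y (restr T Y)"
  by (simp add: topology_on_restr tops_iff_topology_on)

lemma Std_restr_tops: "T \<in> tops n \<Longrightarrow> Y \<subseteq> {1..n} \<Longrightarrow> Std (restr T Y) \<in> tops (card Y)"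
  by (metis Std_tops finite_atLeastAtMost finite_subset topology_on_restr_tops)

lemma Std_restr_eq:
  "T \<in> tops n \<Longrightarrow> Y \<subseteq> {1..n} \<Longrightarrow> Std (restr T Y) = image (rank Y) ` restr T Y"
  by (metis Std_eq_image_rank topology_on_Union topology_on_restr_tops)

lemma Std_restr_upper:
  assumes "T \<in> tops (k + l)"
  shows "Std (restr T ({1..k + l} - {1..k})) = image (\<lambda>x. x - k) ` restr T ({1..k + l} - {1..k})"
proof -
  have "image (rank ({1..k + l} - {1..k})) W = image (\<lambda>x. x - k) W"
    if "W \<in> restr T ({1..k + l} - {1..k})" for W
    using that rank_upper_interval by (auto simp: restr_def)
  then show ?thesis
    using assms by (simp add: Std_restr_eq)
qed

section \<open>Direct and ordinal sums of topologies\<close>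

definition direct_sum_top :: "'a set set \<Rightarrow> 'a set set \<Rightarrow> 'a set set" where
  "direct_sum_top A B = {a \<union> b | a b. a \<in> A \<and> b \<in> B}"

text \<open>The topology on X \<union> Y in which every point of X lies below every point of Y.\<close>

definition ordinal_sum_top :: "'a set set \<Rightarrow> 'a set \<Rightarrow> 'a set set \<Rightarrow> 'a set set" where
  "ordinal_sum_top A Y B = (\<lambda>a. a \<union> Y) ` A \<union> B"

lemma tleq_set_antimono: "S \<subseteq> S' \<Longrightarrow> tleq_set S' I J \<Longrightarrow> tleq_set S I J"
  unfolding tleq_set_def tleq_def by blast

lemma tleq_set_iff: "tleq_set S I J \<longleftrightarrow> (\<forall>V\<in>S. V \<inter> I \<noteq> {} \<longrightarrow> J \<subseteq> V)"
  unfolding tleq_set_def tleq_def by blast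

lemma tless_set_iff_tleq_set:
  assumes "I \<inter> J = {}" "J \<in> S"
  shows "tless_set S I J \<longleftrightarrow> tleq_set S I J"
  using assms unfolding tless_set_def tleq_set_def tless_def tleq_def by blast

lemma direct_sum_topI: "a \<in> A \<Longrightarrow> b \<in> B \<Longrightarrow> a \<union> b \<in> direct_sum_top A B"
  unfolding direct_sum_top_def by blast

lemma direct_sum_topE:
  "V \<in> direct_sum_top A B \<Longrightarrow> (\<And>a b. a \<in> A \<Longrightarrow> b \<in> B \<Longrightarrow> V = a \<union> b \<Longrightarrow> P) \<Longrightarrow> P"
  unfolding direct_sum_top_def by blast

context
  fixes X Y :: "nat set" and A B :: "nat set set"
  assumes disjoint: "X \<inter> Y = {}" and A: "topology_on X A" and B: "topology_on Y B"
begin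

lemma topology_on_direct_sum_top: "topology_on (X \<union> Y) (direct_sum_top A B)"
  unfolding topology_on_def
proof (intro conjI ballI)
  fix V W assume "V \<in> direct_sum_top A B" "W \<in> direct_sum_top A B"
  then obtain a b a' b' where ab: "a \<in> A" "b \<in> B" "V = a \<union> b" and ab': "a' \<in> A" "b' \<in> B" "W = a' \<union> b'"
    by (metis direct_sum_topE)
  have "a \<subseteq> X" "a' \<subseteq> X" "b \<subseteq> Y" "b' \<subseteq> Y"
    using ab ab' topology_onD(1)[OF A] topology_onD(1)[OF B] by auto
  then have "V \<union> W = (a \<union> a') \<union> (b \<union> b')" "V \<inter> W = (a \<inter> a') \<union> (b \<inter> b')"
    using ab(3) ab'(3) disjoint by auto
  then show "V \<union> W \<in> direct_sum_top A B" "V \<inter> W \<in> direct_sum_top A B"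
    using ab(1,2) ab'(1,2) topology_onD(4,5)[OF A] topology_onD(4,5)[OF B] by (simp_all add: direct_sum_topI)
next
  show "direct_sum_top A B \<subseteq> Pow (X \<union> Y)"
    using topology_onD(1)[OF A] topology_onD(1)[OF B] by (auto elim!: direct_sum_topE)
  show "{} \<in> direct_sum_top A B" "X \<union> Y \<in> direct_sum_top A B"
    using direct_sum_topI[OF topology_onD(2)[OF A] topology_onD(2)[OF B]]
      direct_sum_topI[OF topology_onD(3)[OF A] topology_onD(3)[OF B]] by simp_all
qed

lemma subset_direct_sum_top_iff:
  assumes S: "topology_on (X \<union> Y) S"
  shows "S \<subseteq> direct_sum_top A B \<longleftrightarrow> restr S X \<subseteq> A \<and> restr S Y \<subseteq> B"
proof
  assume sub: "S \<subseteq> direct_sum_top A B"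
  have "V \<inter> X \<in> A \<and> V \<inter> Y \<in> B" if V: "V \<in> S" for V
  proof -
    obtain a b where "a \<in> A" "b \<in> B" "V = a \<union> b"
      using sub V by (blast elim: direct_sum_topE)
    moreover have "(a \<union> b) \<inter> X = a" "(a \<union> b) \<inter> Y = b"
      using calculation disjoint topology_onD(1)[OF A] topology_onD(1)[OF B] by blast+
    ultimately show ?thesis
      by simp
  qed
  then show "restr S X \<subseteq> A \<and> restr S Y \<subseteq> B"
    by (auto simp: restr_def)
next
  assume "restr S X \<subseteq> A \<and> restr S Y \<subseteq> B"
  then have "V \<inter> X \<in> A" "V \<inter> Y \<in> B" if "V \<in> S" for V
    using that by (auto simp: restr_def)
  moreover have "V = (V \<inter> X) \<union> (V \<inter> Y)" if "V \<in> S" for V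
    using that topology_onD(1)[OF S] by blast
  ultimately show "S \<subseteq> direct_sum_top A B"
    by (metis subsetI direct_sum_topI)
qed

lemma ordinal_sum_top_Un_Int_upper:
  assumes "a \<in> A" "W \<in> ordinal_sum_top A Y B"
  shows "(a \<union> Y) \<union> W \<in> ordinal_sum_top A Y B \<and> (a \<union> Y) \<inter> W \<in> ordinal_sum_top A Y B"
proof (cases "W \<in> B")
  case True
  then have "(a \<union> Y) \<union> W = a \<union> Y" "(a \<union> Y) \<inter> W = W"
    using topology_onD(1)[OF B] by auto
  then show ?thesis
    using assms by (auto simp: ordinal_sum_top_def)
next
  case False
  then obtain a' where "a' \<in> A" "W = a' \<union> Y"
    using assms(2) by (auto simp: ordinal_sum_top_def)
  moreover have "(a \<union> Y) \<union> (a' \<union> Y) = (a \<union> a') \<union> Y" "(a \<union> Y) \<inter> (a' \<union> Y) = (a \<inter> a') \<union> Y"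
    by auto
  ultimately show ?thesis
    using assms(1) topology_onD(4,5)[OF A] by (auto simp: ordinal_sum_top_def)
qed

lemma topology_on_ordinal_sum_top: "topology_on (X \<union> Y) (ordinal_sum_top A Y B)"
proof -
  have "V \<union> W \<in> ordinal_sum_top A Y B \<and> V \<inter> W \<in> ordinal_sum_top A Y B"
    if VW: "V \<in> ordinal_sum_top A Y B" "W \<in> ordinal_sum_top A Y B" for V W
  proof (cases "V \<in> B \<and> W \<in> B")
    case True
    then show ?thesis
      using topology_onD[OF B] by (auto simp: ordinal_sum_top_def)
  next
    case False
    then consider a where "a \<in> A" "V = a \<union> Y" | a where "a \<in> A" "W = a \<union> Y"
      using VW unfolding ordinal_sum_top_def by blast
    then show ?thesis
    proof cases
      case (1 a)
      then show ?thesis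
        using ordinal_sum_top_Un_Int_upper[OF 1(1) VW(2)] by simp
    next
      case (2 a)
      then show ?thesis
        using ordinal_sum_top_Un_Int_upper[OF 2(1) VW(1)] by (metis Int_commute Un_commute)
    qed
  qed
  moreover have "ordinal_sum_top A Y B \<subseteq> Pow (X \<union> Y)"
    using topology_onD(1)[OF A] topology_onD(1)[OF B] by (auto simp: ordinal_sum_top_def)
  moreover have "{} \<in> ordinal_sum_top A Y B" "X \<union> Y \<in> ordinal_sum_top A Y B"
    using topology_onD(2,3)[OF A] topology_onD(2)[OF B] by (auto simp: ordinal_sum_top_def)
  ultimately show ?thesis
    unfolding topology_on_def by blast
qed

lemma restr_ordinal_sum_top:
  "restr (ordinal_sum_top A Y B) X = A" "restr (ordinal_sum_top A Y B) Y = B"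
proof -
  have a: "(a \<union> Y) \<inter> X = a" "(a \<union> Y) \<inter> Y = Y" if "a \<in> A" for a
    using that disjoint topology_onD(1)[OF A] by blast+
  have b: "b \<inter> X = {}" "b \<inter> Y = b" if "b \<in> B" for b
    using that disjoint topology_onD(1)[OF B] by blast+
  have "(\<lambda>a. (a \<union> Y) \<inter> X) ` A = A" "(\<lambda>b. b \<inter> Y) ` B = B"
    using a(1) b(2) by (force simp: image_iff)+
  moreover have "(\<lambda>b. b \<inter> X) ` B \<subseteq> A" "(\<lambda>a. (a \<union> Y) \<inter> Y) ` A \<subseteq> B"
    using a(2) b(1) topology_onD(2)[OF A] topology_onD(3)[OF B] by auto
  ultimately show "restr (ordinal_sum_top A Y B) X = A" "restr (ordinal_sum_top A Y B) Y = B"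
    unfolding restr_def ordinal_sum_top_def image_Un image_image by (simp_all add: Un_absorb1 Un_absorb2)
qed

lemma tleq_set_ordinal_sum_top: "tleq_set (ordinal_sum_top A Y B) X Y"
  using disjoint topology_onD(1)[OF B] unfolding tleq_set_iff ordinal_sum_top_def by blast

lemma subset_ordinal_sum_top_iff:
  assumes S: "topology_on (X \<union> Y) S"
  shows "S \<subseteq> ordinal_sum_top A Y B \<longleftrightarrow> restr S X \<subseteq> A \<and> restr S Y \<subseteq> B \<and> tleq_set S X Y"
proof
  assume "S \<subseteq> ordinal_sum_top A Y B"
  then show "restr S X \<subseteq> A \<and> restr S Y \<subseteq> B \<and> tleq_set S X Y"
    using restr_mono restr_ordinal_sum_top tleq_set_antimono tleq_set_ordinal_sum_top by metis
next
  assume sub: "restr S X \<subseteq> A \<and> restr S Y \<subseteq> B \<and> tleq_set S X Y"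
  show "S \<subseteq> ordinal_sum_top A Y B"
  proof
    fix V assume V: "V \<in> S"
    then have VXY: "V \<subseteq> X \<union> Y" "V \<inter> X \<in> A" "V \<inter> Y \<in> B"
      using sub topology_onD(1)[OF S] by (auto simp: restr_def)
    show "V \<in> ordinal_sum_top A Y B"
    proof (cases "V \<inter> X = {}")
      case True
      then have "V = V \<inter> Y"
        using VXY(1) by blast
      then show ?thesis
        using VXY(3) by (simp add: ordinal_sum_top_def)
    next
      case False
      then have "V = (V \<inter> X) \<union> Y"
        using sub V VXY(1) unfolding tleq_set_iff by blast
      then show ?thesis
        using VXY(2) unfolding ordinal_sum_top_def by blast
    qed
  qed
qed

end

lemma ordinal_sum_top_restr:
  assumes "X \<inter> Y = {}" and S: "topology_on (X \<union> Y) S" and "Y \<in> S" "tleq_set S X Y"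
  shows "ordinal_sum_top (restr S X) Y (restr S Y) = S"
proof
  have tops: "topology_on X (restr S X)" "topology_on Y (restr S Y)"
    using S by (auto intro: topology_on_restr)
  then show "S \<subseteq> ordinal_sum_top (restr S X) Y (restr S Y)"
    using assms subset_ordinal_sum_top_iff by blast
  have "(V \<inter> X) \<union> Y \<in> S" if "V \<in> S" for V
  proof (cases "V \<inter> X = {}")
    case False
    then have "(V \<inter> X) \<union> Y = V"
      using assms that topology_onD(1)[OF S] unfolding tleq_set_iff by blast
    then show ?thesis
      using that by simp
  qed (use assms in simp)
  moreover have "V \<inter> Y \<in> S" if "V \<in> S" for V
    using that assms topology_onD(5)[OF S] by blast
  ultimately show "ordinal_sum_top (restr S X) Y (restr S Y) \<subseteq> S"
    unfolding ordinal_sum_top_def restr_def by blast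
qed

lemma ordinal_sum_top_subset:
  assumes T: "topology_on (X \<union> Y) T" and "Y \<in> T" "A \<subseteq> restr T X" "B \<subseteq> restr T Y"
  shows "ordinal_sum_top A Y B \<subseteq> T"
proof -
  have "(W \<inter> X) \<union> Y = W \<union> Y" if "W \<in> T" for W
    using that topology_onD(1)[OF T] by blast
  then have "(\<lambda>a. a \<union> Y) ` restr T X \<subseteq> T" "restr T Y \<subseteq> T"
    using assms topology_onD(4,5)[OF T] by (auto simp: restr_def)
  then show ?thesis
    using assms unfolding ordinal_sum_top_def by blast
qed

section \<open>Products of ribbons\<close>

lemma upper_interval_eq: "{1..k + l} - {1..k} = (\<lambda>x. x + k) ` {1..l::nat}"
  using image_add_atLeastAtMost'[of k 1 l] by auto

lemma topology_on_shifted: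
  "T' \<in> tops l \<Longrightarrow> topology_on ({1..k + l} - {1..k}) (image (\<lambda>x. x + k) ` T')"
  unfolding upper_interval_eq tops_iff_topology_on by (rule topology_on_image) auto

lemma tdot_eq_direct_sum_top:
  "T \<in> tops k \<Longrightarrow> tdot T T' = direct_sum_top T (image (\<lambda>x. x + k) ` T')"
  unfolding tdot_def direct_sum_top_def shift_def by (simp add: tsize_tops) blast

lemma tdown_eq_ordinal_sum_top:
  assumes "T \<in> tops k" "T' \<in> tops l"
  shows "tdown T T' = ordinal_sum_top T ({1..k + l} - {1..k}) (image (\<lambda>x. x + k) ` T')"
proof -
  have "{1..k + l} - {1..k} = {Suc k..l + k}"
    by auto
  then show ?thesis
    using assms unfolding tdown_def ordinal_sum_top_def by (simp add: tsize_tops setcompr_eq_image shift_def)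
qed

lemma Std_restr_upper_subset_iff:
  assumes "T'' \<in> tops (k + l)"
  shows "Std (restr T'' ({1..k + l} - {1..k})) \<subseteq> T' \<longleftrightarrow>
         restr T'' ({1..k + l} - {1..k}) \<subseteq> image (\<lambda>x. x + k) ` T'"
proof -
  let ?R = "{1..k + l} - {1..k}"
  have shift_back: "W = (\<lambda>x. x + k) ` (\<lambda>x. x - k) ` W" if "W \<in> restr T'' ?R" for W
  proof -
    have "W \<subseteq> ?R"
      using that by (auto simp: restr_def)
    then have "(\<lambda>x. x - k + k) ` W = W"
      by (intro trans[OF image_cong[OF refl] image_ident]) auto
    then show ?thesis
      by (simp add: image_image)
  qed
  have unshift: "(\<lambda>x. x - k) ` (\<lambda>x. x + k) ` U = U" for U
    by (simp add: image_image)
  show ?thesis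
    unfolding Std_restr_upper[OF assms]
  proof
    assume "image (\<lambda>x. x - k) ` restr T'' ?R \<subseteq> T'"
    then show "restr T'' ?R \<subseteq> image (\<lambda>x. x + k) ` T'"
      using shift_back by blast
  next
    assume "restr T'' ?R \<subseteq> image (\<lambda>x. x + k) ` T'"
    then show "image (\<lambda>x. x - k) ` restr T'' ?R \<subseteq> T'"
      using unshift by auto
  qed
qed

lemma lower_interval_union: "{1..k} \<union> ({1..k + l} - {1..k}) = {1..k + l::nat}"
  by auto

lemma tdot_tops:
  assumes "T \<in> tops k" "T' \<in> tops l"
  shows "tdot T T' \<in> tops (k + l)"
proof -
  have "topology_on ({1..k} \<union> ({1..k + l} - {1..k})) (direct_sum_top T (image (\<lambda>x. x + k) ` T'))"
    using assms by (intro topology_on_direct_sum_top topology_on_shifted) (auto simp: tops_iff_topology_on)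
  then show ?thesis
    by (simp only: tdot_eq_direct_sum_top[OF assms(1)] lower_interval_union tops_iff_topology_on)
qed

lemma tdown_tops:
  assumes "T \<in> tops k" "T' \<in> tops l"
  shows "tdown T T' \<in> tops (k + l)"
proof -
  have "topology_on ({1..k} \<union> ({1..k + l} - {1..k}))
      (ordinal_sum_top T ({1..k + l} - {1..k}) (image (\<lambda>x. x + k) ` T'))"
    using assms by (intro topology_on_ordinal_sum_top topology_on_shifted) (auto simp: tops_iff_topology_on)
  then show ?thesis
    by (simp only: tdown_eq_ordinal_sum_top[OF assms] lower_interval_union tops_iff_topology_on)
qed

lemma subset_tdot_iff:
  assumes "T'' \<in> tops (k + l)" "T \<in> tops k" "T' \<in> tops l"
  shows "T'' \<subseteq> tdot T T' \<longleftrightarrow>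
    restr T'' {1..k} \<subseteq> T \<and> Std (restr T'' ({1..k + l} - {1..k})) \<subseteq> T'"
proof -
  have T'': "topology_on ({1..k} \<union> ({1..k + l} - {1..k})) T''"
    using assms(1) by (simp only: lower_interval_union tops_iff_topology_on)
  show ?thesis
    unfolding tdot_eq_direct_sum_top[OF assms(2)] Std_restr_upper_subset_iff[OF assms(1)]
    by (rule subset_direct_sum_top_iff[OF _ _ topology_on_shifted[OF assms(3)] T''])
      (use assms(2) in \<open>auto simp: tops_iff_topology_on\<close>)
qed

lemma subset_tdown_iff:
  assumes "T'' \<in> tops (k + l)" "T \<in> tops k" "T' \<in> tops l"
  shows "T'' \<subseteq> tdown T T' \<longleftrightarrow>
    restr T'' {1..k} \<subseteq> T \<and> Std (restr T'' ({1..k + l} - {1..k})) \<subseteq> T' \<and>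
    tleq_set T'' {1..k} ({1..k + l} - {1..k})"
proof -
  have T'': "topology_on ({1..k} \<union> ({1..k + l} - {1..k})) T''"
    using assms(1) by (simp only: lower_interval_union tops_iff_topology_on)
  show ?thesis
    unfolding tdown_eq_ordinal_sum_top[OF assms(2,3)] Std_restr_upper_subset_iff[OF assms(1)]
    by (rule subset_ordinal_sum_top_iff[OF _ _ topology_on_shifted[OF assms(3)] T''])
      (use assms(2) in \<open>auto simp: tops_iff_topology_on\<close>)
qed

lemma restr_lower_tops: "T \<in> tops (k + l) \<Longrightarrow> restr T {1..k} \<in> tops k"
  by (simp add: tops_iff_topology_on topology_on_restr)

lemma Std_restr_upper_tops: "T \<in> tops (k + l) \<Longrightarrow> Std (restr T ({1..k + l} - {1..k})) \<in> tops l"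
proof -
  have "card ({1..k + l} - {1..k}) = l"
    unfolding upper_interval_eq by (simp add: card_image)
  then show "T \<in> tops (k + l) \<Longrightarrow> Std (restr T ({1..k + l} - {1..k})) \<in> tops l"
    using Std_restr_tops[of T "k + l" "{1..k + l} - {1..k}"] by auto
qed

lemma sum_bilin_ribbon_below:
  assumes "T \<in> tops k" "T' \<in> tops l"
  shows "(\<Sum>p\<in>{S\<in>tops k. S \<subseteq> T} \<times> {S'\<in>tops l. S' \<subseteq> T'}. bilin f (ribbon (fst p)) (ribbon (snd p)))
    = (bvec (f T T') :: 'k::field vec)"
proof -
  let ?P = "{S\<in>tops k. S \<subseteq> T}" and ?Q = "{S'\<in>tops l. S' \<subseteq> T'}"
  have supp: "supp (ribbon S) \<subseteq> tops n" if "S \<in> tops n" for S n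
    using that supp_ribbon by auto
  have "bilin f (\<Sum>S\<in>?P. ribbon S) (\<Sum>S'\<in>?Q. ribbon S') = (\<Sum>S\<in>?P. bilin f (ribbon S) (\<Sum>S'\<in>?Q. ribbon S'))"
    using supp by (intro bilin_sum_left[where X = "tops k" and Y = "tops l"] finite_tops supp_sum_subset) auto
  also have "\<dots> = (\<Sum>S\<in>?P. \<Sum>S'\<in>?Q. bilin f (ribbon S) (ribbon S') :: 'k vec)"
    using supp by (intro sum.cong refl bilin_sum_right[where X = "tops k" and Y = "tops l"] finite_tops) auto
  finally show ?thesis
    using assms by (simp add: sum.cartesian_product sum_ribbon_below bilin_bvec case_prod_beta)
qed

lemma sum_ribbon_fibres_below:
  assumes "F \<in> tops (k + l)"
    and subset_F_iff: "\<And>T''. T'' \<in> tops (k + l) \<Longrightarrow>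
      T'' \<subseteq> F \<longleftrightarrow> restr T'' {1..k} \<subseteq> S0 \<and> Std (restr T'' ({1..k + l} - {1..k})) \<subseteq> S0' \<and> c T''"
  shows "(\<Sum>q\<in>{S\<in>tops k. S \<subseteq> S0} \<times> {S'\<in>tops l. S' \<subseteq> S0'}.
      \<Sum>T''\<in>{T''\<in>tops (k + l). c T'' \<and> (restr T'' {1..k}, Std (restr T'' ({1..k + l} - {1..k}))) = q}.
        ribbon T'') = (bvec F :: 'k::field vec)"
proof -
  let ?split = "\<lambda>T''. (restr T'' {1..k}, Std (restr T'' ({1..k + l} - {1..k})))"
  let ?P = "{S\<in>tops k. S \<subseteq> S0}" and ?Q = "{S'\<in>tops l. S' \<subseteq> S0'}"
  let ?below = "{T''\<in>tops (k + l). c T'' \<and> ?split T'' \<in> ?P \<times> ?Q}"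
  have "(\<Sum>q\<in>?P \<times> ?Q. \<Sum>T''\<in>{T''\<in>tops (k + l). c T'' \<and> ?split T'' = q}. ribbon T'')
      = (\<Sum>q\<in>?P \<times> ?Q. \<Sum>T''\<in>{T''. T'' \<in> ?below \<and> ?split T'' = q}. ribbon T'')"
    by (intro sum.cong refl) auto
  also have "\<dots> = (\<Sum>T''\<in>?below. ribbon T'')"
    by (rule sum.group) (auto simp: finite_tops)
  also have "?below = {T''\<in>tops (k + l). T'' \<subseteq> F}"
    using subset_F_iff restr_lower_tops Std_restr_upper_tops by blast
  finally show ?thesis
    using assms(1) by (simp add: sum_ribbon_below)
qed

lemma ribbon_product_formula:
  fixes f :: "nat set set \<Rightarrow> nat set set \<Rightarrow> nat set set" and c :: "nat set set \<Rightarrow> bool"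
  assumes f_tops: "\<And>T T'. T \<in> tops k \<Longrightarrow> T' \<in> tops l \<Longrightarrow> f T T' \<in> tops (k + l)"
    and subset_f_iff: "\<And>T T' T''. T \<in> tops k \<Longrightarrow> T' \<in> tops l \<Longrightarrow> T'' \<in> tops (k + l) \<Longrightarrow>
      T'' \<subseteq> f T T' \<longleftrightarrow> restr T'' {1..k} \<subseteq> T \<and> Std (restr T'' ({1..k + l} - {1..k})) \<subseteq> T' \<and> c T''"
    and "T \<in> tops k" "T' \<in> tops l"
  shows "bilin f (ribbon T) (ribbon T') =
    (\<Sum>T''\<in>{T''\<in>tops (k + l). restr T'' {1..k} = T \<and> Std (restr T'' ({1..k + l} - {1..k})) = T' \<and> c T''}.
       ribbon T'' :: 'k::field vec)"
proof -
  let ?split = "\<lambda>T''. (restr T'' {1..k}, Std (restr T'' ({1..k + l} - {1..k})))"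
  let ?H = "\<lambda>p. \<Sum>T''\<in>{T''\<in>tops (k + l). c T'' \<and> ?split T'' = p}. ribbon T'' :: 'k vec"
  have fibre_formula: "bilin f (ribbon (fst p)) (ribbon (snd p)) = ?H p" if "p \<in> tops k \<times> tops l" for p
  proof (rule eq_if_sums_over_lower_sets_eq[OF _ _ that])
    fix p assume "p \<in> tops k \<times> tops l"
    then obtain S0 S0' where p: "p = (S0, S0')" "S0 \<in> tops k" "S0' \<in> tops l"
      by auto
    have lower: "{q\<in>tops k \<times> tops l. q \<le> p} = {S\<in>tops k. S \<subseteq> S0} \<times> {S'\<in>tops l. S' \<subseteq> S0'}"
      using p by (auto simp: less_eq_prod_def)
    show "(\<Sum>q\<in>{q\<in>tops k \<times> tops l. q \<le> p}. bilin f (ribbon (fst q)) (ribbon (snd q))) =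
        (\<Sum>q\<in>{q\<in>tops k \<times> tops l. q \<le> p}. ?H q)"
      unfolding lower sum_bilin_ribbon_below[OF p(2,3)]
      by (rule sum_ribbon_fibres_below[OF f_tops[OF p(2,3)] subset_f_iff[OF p(2,3)], symmetric])
  qed (simp add: finite_tops)
  have "bilin f (ribbon T) (ribbon T') = ?H (T, T')"
    using fibre_formula[of "(T, T')"] assms(3,4) by simp
  also have "\<dots> = (\<Sum>T''\<in>{T''\<in>tops (k + l). restr T'' {1..k} = T \<and>
      Std (restr T'' ({1..k + l} - {1..k})) = T' \<and> c T''}. ribbon T'')"
    by (rule sum.cong) auto
  finally show ?thesis .
qed

lemma prod_dot_ribbon:
  assumes "T \<in> tops k" "T' \<in> tops l"
  shows "prod_dot (ribbon T) (ribbon T') =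
    (\<Sum>T''\<in>{T''\<in>tops (k + l). restr T'' {1..k} = T \<and> Std (restr T'' ({1..k + l} - {1..k})) = T'}.
       ribbon T'' :: 'k::field vec)"
proof -
  have "T'' \<subseteq> tdot S S' \<longleftrightarrow>
      restr T'' {1..k} \<subseteq> S \<and> Std (restr T'' ({1..k + l} - {1..k})) \<subseteq> S' \<and> True"
    if "S \<in> tops k" "S' \<in> tops l" "T'' \<in> tops (k + l)" for S S' T''
    using subset_tdot_iff[OF that(3,1,2)] by simp
  from ribbon_product_formula[OF tdot_tops this assms] show ?thesis
    by (simp add: prod_dot_def)
qed

lemma prod_down_ribbon:
  assumes "T \<in> tops k" "T' \<in> tops l"
  shows "prod_down (ribbon T) (ribbon T') =
    (\<Sum>T''\<in>{T''\<in>tops (k + l). restr T'' {1..k} = T \<and> Std (restr T'' ({1..k + l} - {1..k})) = T' \<and>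
        tleq_set T'' {1..k} ({1..k + l} - {1..k})}. ribbon T'' :: 'k::field vec)"
  unfolding prod_down_def by (rule ribbon_product_formula[OF tdown_tops subset_tdown_iff assms])

section \<open>Coproduct of ribbons\<close>

lemma bij_betw_transport_topologies:
  assumes bij: "bij_betw \<sigma> X Z" and M: "M \<subseteq> Pow X"
  shows "bij_betw (image (image \<sigma>)) {A. topology_on X A \<and> A \<subseteq> M}
           {A'. topology_on Z A' \<and> A' \<subseteq> image \<sigma> ` M}"
proof (rule bij_betw_byWitness[where f' = "image (image (inv_into X \<sigma>))"])
  have inj: "inj_on \<sigma> X" and surj: "\<sigma> ` X = Z"
    using bij by (auto simp: bij_betw_def)
  have inv: "inj_on (inv_into X \<sigma>) Z" "inv_into X \<sigma> ` Z = X"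
    using bij_betw_inv_into[OF bij] by (auto simp: bij_betw_def)
  have unimage: "image (inv_into X \<sigma>) ` image \<sigma> ` A = A" if "A \<subseteq> Pow X" for A
  proof -
    have "image (inv_into X \<sigma>) ` image \<sigma> ` A = (\<lambda>a. a) ` A"
      unfolding image_comp using that inj
      by (intro image_cong refl) (metis PowD comp_apply inv_into_image_cancel subsetD)
    then show ?thesis
      by simp
  qed
  show "\<forall>A\<in>{A. topology_on X A \<and> A \<subseteq> M}. image (inv_into X \<sigma>) ` image \<sigma> ` A = A"
    using unimage by (auto simp: topology_on_def)
  have reimage: "image \<sigma> ` image (inv_into X \<sigma>) ` A' = A'" if "A' \<subseteq> Pow Z" for A'
  proof -
    have "image \<sigma> ` image (inv_into X \<sigma>) ` A' = (\<lambda>a. a) ` A'"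
      unfolding image_comp using that surj
      by (intro image_cong refl) (metis PowD comp_apply image_inv_into_cancel subsetD)
    then show ?thesis
      by simp
  qed
  show "\<forall>A'\<in>{A'. topology_on Z A' \<and> A' \<subseteq> image \<sigma> ` M}. image \<sigma> ` image (inv_into X \<sigma>) ` A' = A'"
    using reimage by (auto simp: topology_on_def)
  show "image (image \<sigma>) ` {A. topology_on X A \<and> A \<subseteq> M} \<subseteq> {A'. topology_on Z A' \<and> A' \<subseteq> image \<sigma> ` M}"
    using topology_on_image[OF _ inj] surj by auto
  show "image (image (inv_into X \<sigma>)) ` {A'. topology_on Z A' \<and> A' \<subseteq> image \<sigma> ` M}
      \<subseteq> {A. topology_on X A \<and> A \<subseteq> M}"
  proof
    fix A assume "A \<in> image (image (inv_into X \<sigma>)) ` {A'. topology_on Z A' \<and> A' \<subseteq> image \<sigma> ` M}"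
    then obtain A' where A': "topology_on Z A'" "A' \<subseteq> image \<sigma> ` M" "A = image (inv_into X \<sigma>) ` A'"
      by auto
    have "A \<subseteq> image (inv_into X \<sigma>) ` image \<sigma> ` M"
      using A' by auto
    then show "A \<in> {A. topology_on X A \<and> A \<subseteq> M}"
      using topology_on_image[OF A'(1) inv(1)] inv(2) unimage[OF M] A'(3) by simp
  qed
qed

lemma bij_betw_restr_pair:
  assumes disjoint: "X \<inter> Y = {}" and T: "topology_on (X \<union> Y) T" and "Y \<in> T"
  shows "bij_betw (\<lambda>S. (restr S X, restr S Y))
    {S. topology_on (X \<union> Y) S \<and> S \<subseteq> T \<and> Y \<in> S \<and> tleq_set S X Y}
    ({A. topology_on X A \<and> A \<subseteq> restr T X} \<times> {B. topology_on Y B \<and> B \<subseteq> restr T Y})"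
proof (rule bij_betw_byWitness[where f' = "\<lambda>(A, B). ordinal_sum_top A Y B"])
  show "\<forall>S\<in>{S. topology_on (X \<union> Y) S \<and> S \<subseteq> T \<and> Y \<in> S \<and> tleq_set S X Y}.
      (case (restr S X, restr S Y) of (A, B) \<Rightarrow> ordinal_sum_top A Y B) = S"
    using disjoint ordinal_sum_top_restr by auto
  show "\<forall>p\<in>{A. topology_on X A \<and> A \<subseteq> restr T X} \<times> {B. topology_on Y B \<and> B \<subseteq> restr T Y}.
      (\<lambda>S. (restr S X, restr S Y)) (case p of (A, B) \<Rightarrow> ordinal_sum_top A Y B) = p"
    using disjoint restr_ordinal_sum_top by auto
  show "(\<lambda>S. (restr S X, restr S Y)) ` {S. topology_on (X \<union> Y) S \<and> S \<subseteq> T \<and> Y \<in> S \<and> tleq_set S X Y}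
      \<subseteq> {A. topology_on X A \<and> A \<subseteq> restr T X} \<times> {B. topology_on Y B \<and> B \<subseteq> restr T Y}"
    by (auto intro: topology_on_restr dest: restr_mono)
  have "ordinal_sum_top A Y B \<in> {S. topology_on (X \<union> Y) S \<and> S \<subseteq> T \<and> Y \<in> S \<and> tleq_set S X Y}"
    if "topology_on X A" "A \<subseteq> restr T X" "topology_on Y B" "B \<subseteq> restr T Y" for A B
  proof -
    have "Y \<in> ordinal_sum_top A Y B"
      using topology_onD(2)[OF that(1)] by (force simp: ordinal_sum_top_def)
    then show ?thesis
      using topology_on_ordinal_sum_top[OF disjoint that(1,3)] ordinal_sum_top_subset[OF T \<open>Y \<in> T\<close> that(2,4)]
        tleq_set_ordinal_sum_top[OF disjoint that(1,3)] by simp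
  qed
  then show "(\<lambda>(A, B). ordinal_sum_top A Y B) `
      ({A. topology_on X A \<and> A \<subseteq> restr T X} \<times> {B. topology_on Y B \<and> B \<subseteq> restr T Y})
      \<subseteq> {S. topology_on (X \<union> Y) S \<and> S \<subseteq> T \<and> Y \<in> S \<and> tleq_set S X Y}"
    by auto
qed

lemma bij_betw_Std_restr:
  assumes "T \<in> tops n" "Y \<subseteq> {1..n}"
  shows "bij_betw (image (image (rank Y))) {A. topology_on Y A \<and> A \<subseteq> restr T Y}
    {A\<in>tops (card Y). A \<subseteq> Std (restr T Y)}"
proof -
  have "finite Y"
    using assms(2) finite_subset by blast
  moreover have "restr T Y \<subseteq> Pow Y"
    by (auto simp: restr_def)
  ultimately show ?thesis
    using bij_betw_transport_topologies[OF bij_betw_rank] by (simp only: Std_restr_eq[OF assms] tops_iff_topology_on)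
qed

lemma bij_betw_Std_restr_pair:
  assumes T: "T \<in> tops n" and U: "U \<in> T"
  shows "bij_betw (\<lambda>S. (Std (restr S ({1..n} - U)), Std (restr S U)))
     {S\<in>tops n. S \<subseteq> T \<and> U \<in> S \<and> tless_set S ({1..n} - U) U}
     ({A\<in>tops (card ({1..n} - U)). A \<subseteq> Std (restr T ({1..n} - U))} \<times>
      {B\<in>tops (card U). B \<subseteq> Std (restr T U)})"
proof -
  let ?Uc = "{1..n} - U"
  have U_sub: "U \<subseteq> {1..n}"
    using T U by (auto simp: tops_iff_topology_on topology_on_def)
  then have union: "?Uc \<union> U = {1..n}" and disjoint: "?Uc \<inter> U = {}"
    by auto
  have T': "topology_on (?Uc \<union> U) T"
    using T by (simp only: union tops_iff_topology_on)
  have dom_eq: "{S. topology_on (?Uc \<union> U) S \<and> S \<subseteq> T \<and> U \<in> S \<and> tleq_set S ?Uc U} =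
      {S\<in>tops n. S \<subseteq> T \<and> U \<in> S \<and> tless_set S ?Uc U}"
    unfolding union using tless_set_iff_tleq_set[OF disjoint] by (auto simp: tops_iff_topology_on)
  have "bij_betw (\<lambda>S. (restr S ?Uc, restr S U)) {S\<in>tops n. S \<subseteq> T \<and> U \<in> S \<and> tless_set S ?Uc U}
      ({A. topology_on ?Uc A \<and> A \<subseteq> restr T ?Uc} \<times> {B. topology_on U B \<and> B \<subseteq> restr T U})"
    using bij_betw_restr_pair[OF disjoint T' U] unfolding dom_eq .
  moreover have "bij_betw (map_prod (image (image (rank ?Uc))) (image (image (rank U))))
      ({A. topology_on ?Uc A \<and> A \<subseteq> restr T ?Uc} \<times> {B. topology_on U B \<and> B \<subseteq> restr T U})
      ({A\<in>tops (card ?Uc). A \<subseteq> Std (restr T ?Uc)} \<times> {B\<in>tops (card U). B \<subseteq> Std (restr T U)})"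
    using T U_sub by (intro bij_betw_map_prod bij_betw_Std_restr) auto
  ultimately have "bij_betw (map_prod (image (image (rank ?Uc))) (image (image (rank U))) \<circ>
      (\<lambda>S. (restr S ?Uc, restr S U))) {S\<in>tops n. S \<subseteq> T \<and> U \<in> S \<and> tless_set S ?Uc U}
      ({A\<in>tops (card ?Uc). A \<subseteq> Std (restr T ?Uc)} \<times> {B\<in>tops (card U). B \<subseteq> Std (restr T U)})"
    by (rule bij_betw_trans)
  then show ?thesis
  proof (rule iffD1[OF bij_betw_cong, rotated])
    fix S assume "S \<in> {S\<in>tops n. S \<subseteq> T \<and> U \<in> S \<and> tless_set S ?Uc U}"
    then have "S \<in> tops n"
      by simp
    then show "(map_prod (image (image (rank ?Uc))) (image (image (rank U))) \<circ>
        (\<lambda>S. (restr S ?Uc, restr S U))) S = (Std (restr S ?Uc), Std (restr S U))"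
      using Std_restr_eq[of S n ?Uc] Std_restr_eq[of S n U] U_sub by simp
  qed
qed

lemma sum_tensor_ribbon_split:
  assumes T: "T \<in> tops n" and U: "U \<in> T"
  shows "(\<Sum>S\<in>{S\<in>tops n. S \<subseteq> T \<and> U \<in> S \<and> tless_set S ({1..n} - U) U}.
      tensor (ribbon (Std (restr S ({1..n} - U)))) (ribbon (Std (restr S U))))
    = (tensor (bvec (Std (restr T ({1..n} - U)))) (bvec (Std (restr T U))) :: 'k::field vec2)"
proof -
  let ?Uc = "{1..n} - U"
  let ?P = "{A\<in>tops (card ?Uc). A \<subseteq> Std (restr T ?Uc)}" and ?Q = "{B\<in>tops (card U). B \<subseteq> Std (restr T U)}"
  have U_sub: "U \<subseteq> {1..n}"
    using T U by (auto simp: tops_iff_topology_on topology_on_def)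
  have "(\<Sum>S\<in>{S\<in>tops n. S \<subseteq> T \<and> U \<in> S \<and> tless_set S ?Uc U}.
      tensor (ribbon (Std (restr S ?Uc))) (ribbon (Std (restr S U))))
    = (\<Sum>p\<in>?P \<times> ?Q. tensor (ribbon (fst p)) (ribbon (snd p)) :: 'k vec2)"
    using sum.reindex_bij_betw[OF bij_betw_Std_restr_pair[OF T U],
        of "\<lambda>p. tensor (ribbon (fst p)) (ribbon (snd p))"] by simp
  also have "\<dots> = tensor (\<Sum>A\<in>?P. ribbon A) (\<Sum>B\<in>?Q. ribbon B)"
    by (simp add: tensor_sum sum.cartesian_product case_prod_beta)
  also have "\<dots> = tensor (bvec (Std (restr T ?Uc))) (bvec (Std (restr T U)))"
    using Std_restr_tops[OF T] U_sub by (simp add: sum_ribbon_below)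
  finally show ?thesis .
qed

lemma coprod_ribbon:
  assumes "T0 \<in> tops n"
  shows "coprod (ribbon T0 :: 'k::field vec) =
    (\<Sum>U\<in>{U\<in>T0. tless_set T0 ({1..n} - U) U}.
       tensor (ribbon (Std (restr T0 ({1..n} - U)))) (ribbon (Std (restr T0 U))))"
proof (rule eq_if_sums_over_lower_sets_eq[OF finite_tops _ assms])
  fix T assume T: "T \<in> tops n"
  let ?below = "{S\<in>tops n. S \<le> T}"
  let ?g = "\<lambda>S U. tensor (ribbon (Std (restr S ({1..n} - U)))) (ribbon (Std (restr S U))) :: 'k vec2"
  have "(\<Sum>S\<in>?below. coprod (ribbon S :: 'k vec)) = coprod (\<Sum>S\<in>?below. ribbon S)"
    using supp_ribbon by (intro coprod_sum[symmetric, OF finite_tops]) auto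
  also have "\<dots> = (\<Sum>U\<in>T. tensor (bvec (Std (restr T ({1..n} - U)))) (bvec (Std (restr T U))))"
    using T topology_on_Union[of "{1..n}" T] unfolding tops_iff_topology_on[symmetric]
    by (simp add: sum_ribbon_below coprod_bvec)
  also have "\<dots> = (\<Sum>U\<in>T. \<Sum>S\<in>{S\<in>tops n. S \<subseteq> T \<and> U \<in> S \<and> tless_set S ({1..n} - U) U}. ?g S U)"
    by (rule sum.cong[OF refl], rule sum_tensor_ribbon_split[OF T, symmetric])
  also have "\<dots> = (\<Sum>U\<in>T. \<Sum>S\<in>{S\<in>?below. U \<in> S \<and> tless_set S ({1..n} - U) U}. ?g S U)"
    by (simp add: conj_assoc)
  also have "\<dots> = (\<Sum>S\<in>?below. \<Sum>U\<in>{U\<in>T. U \<in> S \<and> tless_set S ({1..n} - U) U}. ?g S U)"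
    using T finite_tops by (intro sum.swap_restrict tops_finite) auto
  also have "\<dots> = (\<Sum>S\<in>?below. \<Sum>U\<in>{U\<in>S. tless_set S ({1..n} - U) U}. ?g S U)"
    by (intro sum.cong refl arg_cong[where f = "\<lambda>A. sum _ A"]) auto
  finally show "(\<Sum>S\<in>?below. coprod (ribbon S :: 'k vec)) =
      (\<Sum>S\<in>?below. \<Sum>U\<in>{U\<in>S. tless_set S ({1..n} - U) U}. ?g S U)" .
qed

theorem theorem12:
  shows
  "(\<forall>k l T T'. T \<in> tops k \<longrightarrow> T' \<in> tops l \<longrightarrow>
      prod_dot (ribbon T) (ribbon T') =
      (\<Sum>T''\<in>{T''\<in>tops (k + l). restr T'' {1..k} = T \<and>
                 Std (restr T'' ({1..k + l} - {1..k})) = T'}. (ribbon T'' :: 'k::field vec)))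
   \<and> (\<forall>k l T T'. T \<in> tops k \<longrightarrow> T' \<in> tops l \<longrightarrow>
      prod_down (ribbon T) (ribbon T') =
      (\<Sum>T''\<in>{T''\<in>tops (k + l). restr T'' {1..k} = T \<and>
                 Std (restr T'' ({1..k + l} - {1..k})) = T' \<and>
                 tleq_set T'' {1..k} ({1..k + l} - {1..k})}. (ribbon T'' :: 'k vec)))
   \<and> (\<forall>n T. T \<in> tops n \<longrightarrow>
      coprod (ribbon T :: 'k vec) =
      (\<Sum>U\<in>{U\<in>T. tless_set T ({1..n} - U) U}.
          tensor (ribbon (Std (restr T ({1..n} - U)))) (ribbon (Std (restr T U)))))"
  using prod_dot_ribbon prod_down_ribbon coprod_ribbon by blast

end
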